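(* Let $\mathbb F_q$ be a finite field of characteristic $p$, and let $(G_i,S_i)_i$ be a sequence where each $G_i$ is a finite abelian group with $p\nmid|G_i|$, and $S_i\subset\widehat{G_i}$ is a subset of the $\overline{\mathbb F}_q^\times$-valued character group which is Galois-stable: if $\chi\in S_i$ then $\chi^\sigma\in S_i$ for all $\sigma\in\mathrm{Gal}(\overline{\mathbb F}_q/\mathbb F_q)$. Let $\widehat{H_{S_i}}\subset\widehat{G_i}$ be the subgroup generated by $S_i$. Suppose $|G_i|\to\infty$ and there is $0<\delta<1$ with $|\widehat{H_{S_i}}|\gg|G_i|^\delta$. Then for every $\epsilon>0$, $|S_i|\gg_\epsilon(\ln|G_i|)^{1-\epsilon}$. *)

theory Defs
  imports "HOL-Analysis.Analysis" "HOL-Algebra.Algebraic_Closure_Type"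
begin

text \<open>Characters are taken extensional:
  value 1 outside the carrier, so that distinct characters are distinct functions.\<close>

definition characters :: "('a, 'b) monoid_scheme \<Rightarrow> ('a \<Rightarrow> 'k::field) set" where
  "characters G = {ch. (\<forall>x\<in>carrier G. ch x \<noteq> 0)
      \<and> (\<forall>x\<in>carrier G. \<forall>y\<in>carrier G. ch (x \<otimes>\<^bsub>G\<^esub> y) = ch x * ch y)
      \<and> (\<forall>x. x \<notin> carrier G \<longrightarrow> ch x = 1)}"

definition char_group :: "('a, 'b) monoid_scheme \<Rightarrow> ('a \<Rightarrow> 'k::field) monoid" where
  "char_group G = \<lparr>carrier = characters G, mult = (\<lambda>ch ps x. ch x * ps x), one = (\<lambda>x. 1)\<rparr>"

definition galois_auts :: "('f::{field,finite} alg_closure \<Rightarrow> 'f alg_closure) set" where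
  "galois_auts = {\<sigma>. bij \<sigma> \<and> (\<forall>x y. \<sigma> (x + y) = \<sigma> x + \<sigma> y) \<and> (\<forall>x y. \<sigma> (x * y) = \<sigma> x * \<sigma> y)
      \<and> (\<forall>a. \<sigma> (to_ac a) = to_ac a)}"

definition galois_stable :: "('a \<Rightarrow> 'f::{field,finite} alg_closure) set \<Rightarrow> bool" where
  "galois_stable S \<longleftrightarrow> (\<forall>ch\<in>S. \<forall>\<sigma>\<in>galois_auts. \<sigma> \<circ> ch \<in> S)"

end

theory Submission
  imports Defs "HOL-Combinatorics.Orbits"
begin

text \<open>
  Some power \<open>x \<mapsto> x ^ e\<close> of the Frobenius, with \<open>e = p ^ k \<ge> 2\<close>, fixes \<open>\<bbbF>\<^sub>q\<close> and hence
  lies in the Galois group, so a Galois-stable \<open>S\<close> is closed under \<open>\<chi> \<mapsto> \<chi> ^ e\<close>, an injective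
  map. An orbit of length \<open>m\<close> of this map consists of powers of one character \<open>\<chi>\<close> with
  \<open>\<chi> ^ e ^ m = \<chi>\<close>, so it generates a cyclic group of order \<open>< e ^ m\<close>; multiplying over the
  orbits gives \<open>|\<langle>S\<rangle>| \<le> e ^ |S|\<close>.
\<close>

lemma frobenius_power_periodic:
  "\<exists>k::nat. k > 0 \<and> (\<forall>a::'f::{field,finite}. a ^ (CHAR('f) ^ k) = a)"
proof -
  define F where "F = (\<lambda>a::'f. a ^ CHAR('f))"
  have F_pow: "(F ^^ n) a = a ^ (CHAR('f) ^ n)" for n a
    by (induction n) (auto simp: F_def power_mult[symmetric] mult.commute)
  have "inj F"
  proof (rule injI)
    fix a b assume "F a = F b"
    have "(a - b + b) ^ CHAR('f) = (a - b) ^ CHAR('f) + b ^ CHAR('f)"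
      by (rule freshmans_dream) (simp_all add: prime_CHAR_semidom finite_imp_CHAR_pos)
    with \<open>F a = F b\<close> show "a = b" by (simp add: F_def)
  qed
  obtain i j :: nat where "i < j" "F ^^ i = F ^^ j"
  proof -
    have "\<not> inj (\<lambda>n::nat. F ^^ n)"
      using finite_imageD[of "\<lambda>n::nat. F ^^ n" UNIV] by auto
    thus ?thesis using that by (metis injI linorder_neqE_nat)
  qed
  have "(F ^^ i) ((F ^^ (j - i)) a) = (F ^^ i) a" for a
    using \<open>i < j\<close> \<open>F ^^ i = F ^^ j\<close>
    by (metis comp_apply funpow_add le_add_diff_inverse order.strict_implies_order)
  hence "(F ^^ (j - i)) a = a" for a
    using inj_fn[OF \<open>inj F\<close>, of i] by (simp add: injD)
  hence "\<forall>a::'f. a ^ (CHAR('f) ^ (j - i)) = a"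
    by (simp add: F_pow)
  with \<open>i < j\<close> show ?thesis
    by (intro exI[of _ "j - i"]) simp
qed

lemma frobenius_power_galois_aut:
  obtains e :: nat where "e \<ge> 2" "(\<lambda>x::'f::{field,finite} alg_closure. x ^ e) \<in> galois_auts"
proof -
  obtain k where k: "k > 0" "\<And>a::'f. a ^ (CHAR('f) ^ k) = a"
    using frobenius_power_periodic by blast
  define e where "e = CHAR('f) ^ k"
  have prime: "Factorial_Ring.prime CHAR('f)"
    by (simp add: prime_CHAR_semidom finite_imp_CHAR_pos)
  hence "CHAR('f) ^ 1 \<le> e"
    unfolding e_def using k(1) prime_gt_0_nat[OF prime] by (intro power_increasing) auto
  hence "e \<ge> 2"
    using prime_ge_2_nat[OF prime] by simp
  have add: "(x + y) ^ e = x ^ e + y ^ e" for x y :: "'f alg_closure"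
    by (rule freshmans_dream') (use prime in \<open>simp_all add: e_def\<close>)
  have "inj (\<lambda>x::'f alg_closure. x ^ e)"
  proof (rule injI)
    fix x y :: "'f alg_closure" assume "x ^ e = y ^ e"
    with add[of "x - y" y] show "x = y" by simp
  qed
  moreover have "surj (\<lambda>x::'f alg_closure. x ^ e)"
  proof -
    have "\<exists>y. y ^ e = (x :: 'f alg_closure)" for x
      by (rule nth_root_exists) (use \<open>e \<ge> 2\<close> in auto)
    thus ?thesis by (metis surjI)
  qed
  ultimately have "(\<lambda>x::'f alg_closure. x ^ e) \<in> galois_auts"
    using add k(2) by (auto simp: galois_auts_def bij_def power_mult_distrib e_def
        simp flip: to_ac_power)
  with \<open>e \<ge> 2\<close> show ?thesis using that by blast
qed

lemma funpow_in_invariant_set: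
  assumes "f ` T \<subseteq> T" "y \<in> T"
  shows "(f ^^ n) y \<in> T"
  by (induction n) (use assms in auto)

lemma inj_on_funpow:
  assumes "f ` T \<subseteq> T" "inj_on f T"
  shows "inj_on (f ^^ n) T"
proof (induction n)
  case (Suc n)
  have "(f ^^ n) ` T \<subseteq> T" using funpow_in_invariant_set[OF assms(1)] by blast
  hence "inj_on f ((f ^^ n) ` T)" using assms(2) by (rule inj_on_subset[rotated])
  with Suc.IH have "inj_on (f \<circ> f ^^ n) T" by (rule comp_inj_on)
  thus ?case by (simp add: comp_def)
qed simp

lemma orbit_subset_invariant_set:
  assumes "f ` T \<subseteq> T" "y \<in> T"
  shows "orbit f y \<subseteq> T"
  using funpow_in_invariant_set[OF assms] by (auto simp: orbit_altdef)

lemma self_in_orbit_if_inj_on: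
  assumes "finite T" "f ` T \<subseteq> T" "inj_on f T" "y \<in> T"
  shows "y \<in> orbit f y"
proof -
  note iter = funpow_in_invariant_set[OF assms(2,4)]
  obtain i j where "i < j" "(f ^^ i) y = (f ^^ j) y"
  proof -
    have "range (\<lambda>n. (f ^^ n) y) \<subseteq> T" using iter by auto
    hence "\<not> inj (\<lambda>n. (f ^^ n) y)"
      using finite_imageD[of "\<lambda>n. (f ^^ n) y" UNIV] finite_subset assms(1) by auto
    thus ?thesis using that by (metis injI linorder_neqE_nat)
  qed
  hence "(f ^^ i) ((f ^^ (j - i)) y) = (f ^^ i) y"
    by (metis comp_apply funpow_add le_add_diff_inverse order.strict_implies_order)
  hence "(f ^^ (j - i)) y = y"
    using inj_on_funpow[OF assms(2,3)] iter assms(4) by (meson inj_onD)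
  thus ?thesis using \<open>i < j\<close> by (auto simp: orbit_altdef intro!: exI[of _ "j - i"])
qed

lemma image_diff_orbit_subset:
  assumes "f ` T \<subseteq> T" "inj_on f T" "y \<in> T" "y \<in> orbit f y"
  shows "f ` (T - orbit f y) \<subseteq> T - orbit f y"
proof
  fix z assume "z \<in> f ` (T - orbit f y)"
  then obtain x where x: "x \<in> T" "x \<notin> orbit f y" "z = f x" by auto
  have "f x \<notin> orbit f y"
  proof
    assume "f x \<in> orbit f y"
    then obtain n where "n > 0" "f x = (f ^^ n) y" by (auto simp: orbit_altdef)
    hence "f x = f ((f ^^ (n - 1)) y)" by (metis Suc_diff_1 comp_apply funpow.simps(2))
    moreover have "(f ^^ (n - 1)) y \<in> orbit f y"
      by (subst orbit_altdef_self_in[OF assms(4)]) blast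
    moreover have "orbit f y \<subseteq> T"
      using assms(1,3) by (rule orbit_subset_invariant_set)
    ultimately have "x \<in> orbit f y"
      using assms(2) x(1) by (metis inj_onD subsetD)
    with x(2) show False ..
  qed
  with x assms(1) show "z \<in> T - orbit f y" by auto
qed

lemma funpow_card_orbit:
  assumes "x \<in> orbit f x"
  shows "(f ^^ card (orbit f x)) x = x"
proof -
  have "card (orbit f x) = funpow_dist1 f x x"
    using orbit_conv_funpow_dist1[OF assms] inj_on_funpow_dist1[OF assms] by (simp add: card_image)
  thus ?thesis using funpow_dist1_prop[OF assms] by simp
qed

lemma (in group) generate_singleton_finite_card_less:
  assumes y: "y \<in> carrier G" and "y [^] n = y" "n \<ge> 2"
  shows "finite (generate G {y})" "card (generate G {y}) < n"
proof -
  have "y [^] (n - 1) \<otimes> y = y [^] n"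
    using assms(3) nat_pow_Suc[of y "n - 1"] by simp
  also have "\<dots> = \<one> \<otimes> y"
    using assms(2) y by simp
  finally have "y [^] (n - 1) = \<one>"
    using y by simp
  hence dvd: "ord y dvd n - 1"
    using pow_eq_id[OF y] by simp
  have "n - 1 > 0" using assms(3) by simp
  hence "0 < ord y"
    using dvd by (cases "ord y = 0") auto
  moreover have "ord y < n"
    using dvd_imp_le[OF dvd \<open>n - 1 > 0\<close>] assms(3) by simp
  moreover have "card (generate G {y}) = ord y"
    using generate_pow_card[OF y] by simp
  ultimately show "finite (generate G {y})" "card (generate G {y}) < n"
    by (auto intro: card_ge_0_finite)
qed

lemma (in comm_group) generate_Un_finite_card_le:
  assumes "A \<subseteq> carrier G" "B \<subseteq> carrier G" "finite (generate G A)" "finite (generate G B)"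
  shows "finite (generate G (A \<union> B))"
    "card (generate G (A \<union> B)) \<le> card (generate G A) * card (generate G B)"
proof -
  let ?P = "generate G A <#> generate G B"
  have sub: "subgroup (generate G A) G" "subgroup (generate G B) G"
    using assms(1,2) by (auto intro: generate_is_subgroup)
  have P_eq: "?P = (\<lambda>(a, b). a \<otimes> b) ` (generate G A \<times> generate G B)"
    by (auto simp: set_mult_def)
  have "A \<union> B \<subseteq> ?P"
  proof
    fix x assume "x \<in> A \<union> B"
    then consider "x \<in> A" | "x \<in> B" by blast
    thus "x \<in> ?P"
    proof cases
      case 1
      hence "x \<otimes> \<one> \<in> ?P" unfolding set_mult_def by (blast intro: generate.incl generate.one)
      with 1 assms(1) show ?thesis by auto
    next
      case 2
      hence "\<one> \<otimes> x \<in> ?P" unfolding set_mult_def by (blast intro: generate.incl generate.one)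
      with 2 assms(2) show ?thesis by auto
    qed
  qed
  hence sub_P: "generate G (A \<union> B) \<subseteq> ?P"
    using mult_subgroups[OF sub] by (rule generate_subgroup_incl)
  have fin_P: "finite ?P"
    unfolding P_eq using assms(3,4) by simp
  have "card ?P \<le> card (generate G A) * card (generate G B)"
    unfolding P_eq using assms(3,4) card_image_le[of "generate G A \<times> generate G B"]
    by (simp add: card_cartesian_product)
  with card_mono[OF fin_P sub_P]
  show "card (generate G (A \<union> B)) \<le> card (generate G A) * card (generate G B)"
    by linarith
  show "finite (generate G (A \<union> B))"
    using finite_subset[OF sub_P fin_P] .
qed

lemma (in group) generate_power_orbit_finite_card_le:
  fixes e :: nat and y :: 'a
  defines "Y \<equiv> orbit (\<lambda>x. x [^] e) y"
  assumes "e \<ge> 2" "y \<in> carrier G" "y \<in> Y"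
  shows "finite (generate G Y)" "card (generate G Y) \<le> e ^ card Y"
proof -
  have pow: "((\<lambda>x. x [^] e) ^^ n) y = y [^] (e ^ n)" for n
    by (induction n) (simp_all add: assms(3) nat_pow_pow mult.commute)
  have "0 < card Y"
    using assms(4) unfolding Y_def by (simp add: card_gt_0_iff finite_orbit orbit_nonempty)
  hence "e ^ 1 \<le> e ^ card Y"
    using assms(2) by (intro power_increasing) auto
  hence "2 \<le> e ^ card Y"
    using assms(2) by simp
  moreover have "y [^] (e ^ card Y) = y"
    using funpow_card_orbit[of y "\<lambda>x. x [^] e"] assms(4) unfolding Y_def pow .
  ultimately have fin: "finite (generate G {y})" and card: "card (generate G {y}) < e ^ card Y"
    using generate_singleton_finite_card_less[OF assms(3)] by blast+
  have sub: "generate G Y \<subseteq> generate G {y}"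
  proof (rule generate_subgroup_incl)
    show "Y \<subseteq> generate G {y}"
      unfolding Y_def orbit_altdef pow generate_pow[OF assms(3)]
      by (auto simp flip: int_pow_int)
  qed (use assms(3) in \<open>auto intro: generate_is_subgroup\<close>)
  show "finite (generate G Y)"
    using finite_subset[OF sub fin] .
  show "card (generate G Y) \<le> e ^ card Y"
    using card_mono[OF fin sub] card by linarith
qed

lemma (in comm_group) generate_power_stable_finite_card_le:
  fixes e :: nat
  assumes "e \<ge> 2" "inj_on (\<lambda>x. x [^] e) (carrier G)"
    and "finite T" "T \<subseteq> carrier G" "(\<lambda>x. x [^] e) ` T \<subseteq> T"
  shows "finite (generate G T) \<and> card (generate G T) \<le> e ^ card T"
  using assms(3-5)
proof (induction T rule: finite_psubset_induct)
  case (psubset T)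
  show ?case
  proof (cases "T = {}")
    case True
    thus ?thesis by (simp add: generate_empty)
  next
    case False
    then obtain y where "y \<in> T" by blast
    define Y where "Y = orbit (\<lambda>x. x [^] e) y"
    note fT = psubset.prems(2)
    have inj: "inj_on (\<lambda>x. x [^] e) T"
      using assms(2) psubset.prems(1) by (rule inj_on_subset)
    have "y \<in> Y"
      unfolding Y_def using psubset.hyps fT inj \<open>y \<in> T\<close> by (rule self_in_orbit_if_inj_on)
    have "Y \<subseteq> T"
      unfolding Y_def using fT \<open>y \<in> T\<close> by (rule orbit_subset_invariant_set)
    have gen_Y: "finite (generate G Y)" "card (generate G Y) \<le> e ^ card Y"
      using generate_power_orbit_finite_card_le[OF assms(1)] psubset.prems(1) \<open>y \<in> T\<close> \<open>y \<in> Y\<close>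
      unfolding Y_def by auto
    have "(\<lambda>x. x [^] e) ` (T - Y) \<subseteq> T - Y"
      unfolding Y_def using fT inj \<open>y \<in> T\<close> \<open>y \<in> Y\<close>[unfolded Y_def]
      by (rule image_diff_orbit_subset)
    moreover have "T - Y \<subset> T" using \<open>y \<in> Y\<close> \<open>y \<in> T\<close> by blast
    ultimately have gen_rest:
      "finite (generate G (T - Y)) \<and> card (generate G (T - Y)) \<le> e ^ card (T - Y)"
      using psubset.IH psubset.prems(1) by blast
    have "Y \<union> (T - Y) = T" and card_T: "card T = card Y + card (T - Y)"
      using \<open>Y \<subseteq> T\<close> psubset.hyps by (auto simp: card_Diff_subset card_mono finite_subset)
    have "Y \<subseteq> carrier G" "T - Y \<subseteq> carrier G"
      using \<open>Y \<subseteq> T\<close> psubset.prems(1) by auto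
    note gen_Un = generate_Un_finite_card_le[OF this gen_Y(1) conjunct1[OF gen_rest]]
    have "card (generate G T) \<le> card (generate G Y) * card (generate G (T - Y))"
      using gen_Un(2) unfolding \<open>Y \<union> (T - Y) = T\<close> .
    also have "\<dots> \<le> e ^ card Y * e ^ card (T - Y)"
      using gen_Y(2) gen_rest by (intro mult_mono) auto
    also have "\<dots> = e ^ card T"
      by (simp add: card_T power_add)
    finally show ?thesis
      using gen_Un(1) unfolding \<open>Y \<union> (T - Y) = T\<close> by blast
  qed
qed

lemma eventually_ln_powr_le_of_powr_le_power:
  fixes N :: "nat \<Rightarrow> real" and s :: "nat \<Rightarrow> nat"
  assumes N: "filterlim N at_top sequentially" and "b > 1" "\<delta> > 0" "c > 0"
    and bound: "\<forall>\<^sub>F i in sequentially. c * N i powr \<delta> \<le> b ^ s i"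
    and "r \<le> 1"
  shows "\<exists>C>0. \<forall>\<^sub>F i in sequentially. C * ln (N i) powr r \<le> s i"
proof -
  define C where "C = \<delta> / (2 * ln b)"
  have "C > 0" using \<open>b > 1\<close> \<open>\<delta> > 0\<close> by (simp add: C_def)
  have "filterlim (\<lambda>i. ln (N i)) at_top sequentially"
    using ln_at_top N by (rule filterlim_compose)
  hence "\<forall>\<^sub>F i in sequentially. max 1 (- 2 * ln c / \<delta>) \<le> ln (N i)"
    unfolding filterlim_at_top by blast
  moreover have "\<forall>\<^sub>F i in sequentially. 0 < N i"
    using N by (simp add: filterlim_at_top_dense)
  ultimately have "\<forall>\<^sub>F i in sequentially. C * ln (N i) powr r \<le> s i"
    using bound
  proof eventually_elim
    case (elim i)
    have "ln c + \<delta> * ln (N i) = ln (c * N i powr \<delta>)"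
      using elim(2) \<open>c > 0\<close> by (simp add: ln_mult)
    also have "\<dots> \<le> ln (b ^ s i)"
      using elim(2,3) \<open>c > 0\<close> \<open>b > 1\<close> by (subst ln_le_cancel_iff) auto
    also have "\<dots> = s i * ln b"
      using \<open>b > 1\<close> by (simp add: ln_realpow)
    finally have "ln c + \<delta> * ln (N i) \<le> s i * ln b" .
    moreover have "- 2 * ln c \<le> \<delta> * ln (N i)"
      using elim(1) \<open>\<delta> > 0\<close> by (simp add: field_simps)
    ultimately have "C * ln (N i) \<le> s i"
      using \<open>b > 1\<close> by (simp add: C_def field_simps)
    moreover have "ln (N i) powr r \<le> ln (N i)"
      using powr_mono[OF \<open>r \<le> 1\<close>, of "ln (N i)"] elim(1) by (simp add: powr_one)
    hence "C * ln (N i) powr r \<le> C * ln (N i)"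
      using \<open>C > 0\<close> by simp
    ultimately show ?case by linarith
  qed
  with \<open>C > 0\<close> show ?thesis by blast
qed

lemma comm_group_char_group: "comm_group (char_group G :: ('a \<Rightarrow> 'k::field) monoid)"
proof (rule comm_groupI)
  fix x y :: "'a \<Rightarrow> 'k"
  assume "x \<in> carrier (char_group G)" "y \<in> carrier (char_group G)"
  thus "x \<otimes>\<^bsub>char_group G\<^esub> y \<in> carrier (char_group G)"
    by (auto simp: char_group_def characters_def mult_ac)
next
  fix x :: "'a \<Rightarrow> 'k"
  assume "x \<in> carrier (char_group G)"
  hence x: "x \<in> characters G" by (simp add: char_group_def)
  have "(\<lambda>a. inverse (x a)) \<in> characters G"
    using x by (auto simp: characters_def inverse_mult_distrib)
  moreover have "(\<lambda>a. inverse (x a) * x a) = (\<lambda>a. 1)"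
    using x by (auto simp: characters_def fun_eq_iff intro: left_inverse)
  ultimately show "\<exists>y\<in>carrier (char_group G). y \<otimes>\<^bsub>char_group G\<^esub> x = \<one>\<^bsub>char_group G\<^esub>"
    by (auto simp: char_group_def)
qed (auto simp: char_group_def characters_def mult_ac)

lemma char_group_nat_pow: "x [^]\<^bsub>char_group G\<^esub> (n::nat) = (\<lambda>a. (x a :: 'k::field) ^ n)"
  by (induction n) (simp_all add: char_group_def mult.commute)

lemma galois_stable_card_generate_le:
  fixes S :: "('a \<Rightarrow> 'f::{field,finite} alg_closure) set"
  assumes "S \<subseteq> characters G" "galois_stable S"
    and "e \<ge> 2" "(\<lambda>x::'f alg_closure. x ^ e) \<in> galois_auts"
  shows "card (generate (char_group G) S) \<le> e ^ card S"
proof (cases "finite S")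
  case False
  \<comment> \<open>then both cardinalities are the junk value 0\<close>
  hence "infinite (generate (char_group G) S)"
    using infinite_super generate.incl by (metis subsetI)
  thus ?thesis by simp
next
  case True
  interpret comm_group "char_group G :: ('a \<Rightarrow> 'f alg_closure) monoid"
    by (rule comm_group_char_group)
  have inj_pow: "inj (\<lambda>x::'f alg_closure. x ^ e)"
    using assms(4) by (simp add: galois_auts_def bij_def)
  have "inj (\<lambda>x::'a \<Rightarrow> 'f alg_closure. x [^]\<^bsub>char_group G\<^esub> e)"
  proof (rule injI)
    fix x y :: "'a \<Rightarrow> 'f alg_closure"
    assume "x [^]\<^bsub>char_group G\<^esub> e = y [^]\<^bsub>char_group G\<^esub> e"
    hence "x a ^ e = y a ^ e" for a by (simp add: char_group_nat_pow fun_eq_iff)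
    hence "x a = y a" for a using injD[OF inj_pow, of "x a" "y a"] by simp
    thus "x = y" by (rule ext)
  qed
  hence "inj_on (\<lambda>x::'a \<Rightarrow> 'f alg_closure. x [^]\<^bsub>char_group G\<^esub> e) (carrier (char_group G))"
    by (rule inj_on_subset) simp
  moreover have "(\<lambda>x. x [^]\<^bsub>char_group G\<^esub> e) ` S \<subseteq> S"
    using assms(2,4) by (auto simp: galois_stable_def char_group_nat_pow comp_def)
  ultimately show ?thesis
    using generate_power_stable_finite_card_le assms(1,3) True by (simp add: char_group_def)
qed

theorem mainTheorem6:
  fixes G :: "nat \<Rightarrow> 'a monoid"
    and S :: "nat \<Rightarrow> ('a \<Rightarrow> 'f::{field,finite} alg_closure) set"
    and \<delta> c :: real
  assumes grp: "\<And>i. comm_group (G i)"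
    and fin: "\<And>i. finite (carrier (G i))"
    and coprime: "\<And>i. \<not> CHAR('f) dvd card (carrier (G i))"
    and Ssub: "\<And>i. S i \<subseteq> characters (G i)"
    and Sgal: "\<And>i. galois_stable (S i)"
    and Gtend: "filterlim (\<lambda>i. real (card (carrier (G i)))) at_top sequentially"
    and \<delta>: "0 < \<delta>" "\<delta> < 1"
    and c: "c > 0"
    and H: "\<forall>\<^sub>F i in sequentially.
              real (card (generate (char_group (G i)) (S i))) \<ge> c * real (card (carrier (G i))) powr \<delta>"
  shows "\<forall>\<epsilon>>0. \<exists>C>0. \<forall>\<^sub>F i in sequentially.
           real (card (S i)) \<ge> C * ln (real (card (carrier (G i)))) powr (1 - \<epsilon>)"
proof (intro allI impI)
  fix \<epsilon> :: real
  assume "\<epsilon> > 0"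
  obtain e :: nat where e: "e \<ge> 2" "(\<lambda>x::'f alg_closure. x ^ e) \<in> galois_auts"
    by (rule frobenius_power_galois_aut)
  have "real e > 1" using e(1) by simp
  moreover have "\<forall>\<^sub>F i in sequentially. c * real (card (carrier (G i))) powr \<delta> \<le> real e ^ card (S i)"
    using H
  proof eventually_elim
    case (elim i)
    have "card (generate (char_group (G i)) (S i)) \<le> e ^ card (S i)"
      by (rule galois_stable_card_generate_le[OF Ssub Sgal e])
    with elim show ?case by (metis of_nat_le_iff of_nat_power order.trans)
  qed
  moreover have "1 - \<epsilon> \<le> 1" using \<open>\<epsilon> > 0\<close> by simp
  ultimately show "\<exists>C>0. \<forall>\<^sub>F i in sequentially.
           real (card (S i)) \<ge> C * ln (real (card (carrier (G i)))) powr (1 - \<epsilon>)"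
    by (rule eventually_ln_powr_le_of_powr_le_power[OF Gtend _ \<delta>(1) c])
qed

end
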